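(* Let $b(\lambda)=\frac14\lambda^4+\frac12p\lambda^2+q\lambda$ with $p<0$, $q\in\mathbb{R}$. For $\eta\ne q$ let $\lambda(\eta)$ be the unique point at which $\lambda\mapsto\eta\lambda-b(\lambda)$ attains its global maximum, and let $\lambda(q)=\sqrt{-p}$ (so that $|\lambda(\eta)|\ge\sqrt{-p}$ for all $\eta$). Fix $x$ with $|x|>\sqrt{-p}$. Then for all $\eta\in\mathbb{R}$: (a) $x^2+x\lambda(\eta)+\lambda(\eta)^2+p\ge -2p$ if $|x|\ge2\sqrt{-p}$, and $\ge|x|(|x|-\sqrt{-p})$ if $\sqrt{-p}<|x|<2\sqrt{-p}$; (b) $x^2+2x\lambda(\eta)+3\lambda(\eta)^2+2p\ge-4p$ if $|x|\ge3\sqrt{-p}$, and $\ge(|x|-\sqrt{-p})^2$ if $\sqrt{-p}<|x|<3\sqrt{-p}$. In particular both expressions are bounded below by a positive constant independent of $\eta$. *)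

theory Defs
  imports Complex_Main
begin

definition bfun :: "real \<Rightarrow> real \<Rightarrow> real \<Rightarrow> real" where
  "bfun p q l = l^4 / 4 + p * l^2 / 2 + q * l"

definition lam :: "real \<Rightarrow> real \<Rightarrow> real \<Rightarrow> real" where
  "lam p q eta = (if eta = q then sqrt (-p)
     else (THE l. \<forall>m. eta * m - bfun p q m \<le> eta * l - bfun p q l))"

end

theory Submission
  imports Defs
begin

text \<open>For \<open>\<eta> \<noteq> q\<close> the maximiser \<open>\<lambda>(\<eta>)\<close> is the root \<open>l\<close> of the critical-point equation
  \<open>l\<^sup>3 + p l = \<eta> - q\<close> lying outside \<open>[-\<surd>(-p), \<surd>(-p)]\<close>: such a root exists by the intermediate
  value theorem, and the exact factorisation of \<open>\<phi>(l) - \<phi>(m)\<close>, with \<open>\<phi>(m) = \<eta> m - b(m)\<close>,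
  shows that it is the strict global maximiser. Hence \<open>\<lambda>(\<eta>)\<^sup>2 \<ge> -p\<close> always, and both bounds
  become elementary inequalities for quadratic forms in \<open>x\<close> and \<open>L\<close> subject to \<open>L\<^sup>2 \<ge> -p\<close>.\<close>

lemma bfun_gap_at_critical_point:
  fixes p q eta l m :: real
  assumes "eta - q = l^3 + p*l"
  shows "(eta*l - bfun p q l) - (eta*m - bfun p q m) = (m - l)^2/4 * ((m + l)^2 + 2*(l^2 + p))"
proof -
  have "eta = l^3 + p*l + q" using assms by simp
  then show ?thesis
    unfolding bfun_def by (simp add: field_simps power2_eq_square power3_eq_cube power4_eq_xxxx)
qed

lemma lam_eq_critical_point:
  fixes p q eta l :: real
  assumes "eta \<noteq> q" and crit: "eta - q = l^3 + p*l" and outside: "-p < l^2"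
  shows "lam p q eta = l"
proof -
  have gap_pos: "0 < (m - l)^2/4 * ((m + l)^2 + 2*(l^2 + p))" if "m \<noteq> l" for m
    using that outside by (intro mult_pos_pos) (auto intro: add_nonneg_pos)
  have "(THE l. \<forall>m. eta*m - bfun p q m \<le> eta*l - bfun p q l) = l"
  proof (rule the_equality)
    show "\<forall>m. eta*m - bfun p q m \<le> eta*l - bfun p q l"
      using gap_pos bfun_gap_at_critical_point[OF crit] by (metis diff_ge_0_iff_ge order.refl less_imp_le)
  next
    fix k assume "\<forall>m. eta*m - bfun p q m \<le> eta*k - bfun p q k"
    then have "eta*l - bfun p q l \<le> eta*k - bfun p q k" by blast
    then show "k = l"
      using gap_pos[of k] bfun_gap_at_critical_point[OF crit, of k] by fastforce
  qed
  then show ?thesis using \<open>eta \<noteq> q\<close> unfolding lam_def by simp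
qed

lemma depressed_cubic_root_beyond_sqrt:
  fixes p s :: real
  assumes "p < 0" and "0 < s"
  shows "\<exists>l. l^3 + p*l = s \<and> -p < l^2"
proof -
  define a where "a = sqrt (-p)"
  have "0 < a" and a2: "a^2 = -p" using assms by (auto simp: a_def)
  define f where "f l = l^3 + p*l" for l :: real
  have p_eq: "p = - (a*a)" using a2 by (simp add: power2_eq_square)
  have f_eq: "f l = l * (l - a) * (l + a)" for l
    unfolding f_def p_eq by (simp add: power3_eq_cube algebra_simps)
  have "1 * (s + 1) * 1 \<le> (a + s + 1) * (a + s + 1 - a) * (a + s + 1 + a)"
    using \<open>0 < a\<close> \<open>0 < s\<close> by (intro mult_mono) auto
  then have "s \<le> f (a + s + 1)" by (simp add: f_eq)
  moreover have "f a \<le> s" using \<open>0 < s\<close> by (simp add: f_eq)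
  ultimately obtain l where "a \<le> l" "f l = s"
    using IVT[of f a s "a + s + 1"] \<open>0 < s\<close> unfolding f_def by (auto intro!: continuous_intros)
  moreover from this have "l \<noteq> a" using \<open>0 < s\<close> by (auto simp: f_eq)
  ultimately have "a^2 < l^2" "f l = s" using \<open>0 < a\<close> by (auto intro: power_strict_mono)
  then show ?thesis using a2 unfolding f_def by auto
qed

lemma lam_square_ge:
  fixes p q eta :: real
  assumes "p < 0"
  shows "-p \<le> (lam p q eta)^2"
proof (cases "eta = q")
  case True
  then show ?thesis using assms by (simp add: lam_def)
next
  case False
  obtain l where "l^3 + p*l = \<bar>eta - q\<bar>" "-p < l^2"
    using depressed_cubic_root_beyond_sqrt[OF assms, of "\<bar>eta - q\<bar>"] False by auto
  moreover have "(-l)^3 + p*(-l) = -(l^3 + p*l)" by (simp add: power3_eq_cube)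
  ultimately have "\<exists>l. eta - q = l^3 + p*l \<and> -p < l^2"
    by (cases "eta - q \<ge> 0") (force, metis abs_of_neg not_le minus_minus power2_minus)
  then show ?thesis using lam_eq_critical_point[OF False] by (metis less_imp_le)
qed

lemma quadratic_form_bound_large:
  fixes a x L :: real
  assumes "0 \<le> a" and "2*a \<le> \<bar>x\<bar>"
  shows "2*a^2 \<le> x^2 + x*L + L^2 - a^2"
proof -
  have "(2*a)^2 \<le> x^2" using assms by (metis abs_le_square_iff abs_of_nonneg mult_nonneg_nonneg zero_le_numeral)
  then have "4*a^2 \<le> x^2" by simp
  moreover have "x^2 + x*L + L^2 = (L + x/2)^2 + 3/4*x^2" by (simp add: power2_eq_square algebra_simps)
  ultimately show ?thesis using zero_le_power2[of "L + x/2"] by linarith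
qed

lemma quadratic_form_bound_small:
  fixes a x L :: real
  assumes "a \<le> \<bar>L\<bar>" and "\<bar>x\<bar> < 2*a"
  shows "\<bar>x\<bar> * (\<bar>x\<bar> - a) \<le> x^2 + x*L + L^2 - a^2"
proof -
  let ?u = "\<bar>x\<bar>" and ?t = "\<bar>L\<bar>"
  have "- (?u * ?t) \<le> x*L" by (simp add: abs_mult[symmetric])
  moreover have "?u^2 - ?u*?t + ?t^2 - a^2 - ?u*(?u - a) = (?t - a)*(?t + a - ?u)"
    by (simp add: power2_eq_square algebra_simps)
  moreover have "0 \<le> (?t - a)*(?t + a - ?u)" using assms by (intro mult_nonneg_nonneg) auto
  ultimately show ?thesis by simp
qed

lemma weighted_quadratic_form_bound_large:
  fixes a x L :: real
  assumes "0 \<le> a" and "3*a \<le> \<bar>x\<bar>"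
  shows "4*a^2 \<le> x^2 + 2*x*L + 3*L^2 - 2*a^2"
proof -
  have "(3*a)^2 \<le> x^2" using assms by (metis abs_le_square_iff abs_of_nonneg mult_nonneg_nonneg zero_le_numeral)
  then have "9*a^2 \<le> x^2" by simp
  moreover have "x^2 + 2*x*L + 3*L^2 = 3*(L + x/3)^2 + 2/3*x^2" by (simp add: power2_eq_square algebra_simps)
  ultimately show ?thesis using zero_le_power2[of "L + x/3"] by linarith
qed

lemma weighted_quadratic_form_bound_small:
  fixes a x L :: real
  assumes "a \<le> \<bar>L\<bar>" and "\<bar>x\<bar> < 3*a"
  shows "(\<bar>x\<bar> - a)^2 \<le> x^2 + 2*x*L + 3*L^2 - 2*a^2"
proof -
  let ?u = "\<bar>x\<bar>" and ?t = "\<bar>L\<bar>"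
  have "- (?u * ?t) \<le> x*L" by (simp add: abs_mult[symmetric])
  moreover have "?u^2 - 2*?u*?t + 3*?t^2 - 2*a^2 - (?u - a)^2 = (?t - a)*(3*?t + 3*a - 2*?u)"
    by (simp add: power2_eq_square algebra_simps)
  moreover have "0 \<le> (?t - a)*(3*?t + 3*a - 2*?u)" using assms by (intro mult_nonneg_nonneg) auto
  ultimately show ?thesis by simp
qed

theorem proposition6p1:
  fixes p q x :: real
  assumes "p < 0" and "\<bar>x\<bar> > sqrt (-p)"
  shows "(\<forall>eta. (\<bar>x\<bar> \<ge> 2 * sqrt (-p) \<longrightarrow>
              x^2 + x * lam p q eta + (lam p q eta)^2 + p \<ge> -2 * p)
          \<and> (\<bar>x\<bar> < 2 * sqrt (-p) \<longrightarrow>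
              x^2 + x * lam p q eta + (lam p q eta)^2 + p \<ge> \<bar>x\<bar> * (\<bar>x\<bar> - sqrt (-p)))
          \<and> (\<bar>x\<bar> \<ge> 3 * sqrt (-p) \<longrightarrow>
              x^2 + 2 * x * lam p q eta + 3 * (lam p q eta)^2 + 2 * p \<ge> -4 * p)
          \<and> (\<bar>x\<bar> < 3 * sqrt (-p) \<longrightarrow>
              x^2 + 2 * x * lam p q eta + 3 * (lam p q eta)^2 + 2 * p \<ge> (\<bar>x\<bar> - sqrt (-p))^2))
        \<and> (\<exists>c > 0. \<forall>eta.
              x^2 + x * lam p q eta + (lam p q eta)^2 + p \<ge> c
            \<and> x^2 + 2 * x * lam p q eta + 3 * (lam p q eta)^2 + 2 * p \<ge> c)"
  (is "(\<forall>eta. ?bounds eta) \<and> _")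
proof -
  define a where "a = sqrt (-p)"
  have "0 < a" and a2: "a^2 = -p" and "a < \<bar>x\<bar>" using assms by (auto simp: a_def)
  have lam_ge: "a \<le> \<bar>lam p q eta\<bar>" for eta
    using lam_square_ge[OF \<open>p < 0\<close>] a2 \<open>0 < a\<close> by (metis abs_le_square_iff abs_of_pos)
  have bounds: "?bounds eta" for eta
    using quadratic_form_bound_large[of a x "lam p q eta"] quadratic_form_bound_small[OF lam_ge, of x eta]
      weighted_quadratic_form_bound_large[of a x "lam p q eta"]
      weighted_quadratic_form_bound_small[OF lam_ge, of x eta] \<open>0 < a\<close> a2
    unfolding a_def[symmetric] by (simp add: algebra_simps)
  define c where "c = min (a^2) ((\<bar>x\<bar> - a)^2)"
  have "0 < c" using \<open>0 < a\<close> \<open>a < \<bar>x\<bar>\<close> by (simp add: c_def)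
  moreover have "(\<bar>x\<bar> - a)^2 \<le> \<bar>x\<bar> * (\<bar>x\<bar> - a)"
    using \<open>0 < a\<close> \<open>a < \<bar>x\<bar>\<close> by (simp add: power2_eq_square mult_right_mono)
  ultimately have "\<forall>eta. c \<le> x^2 + x * lam p q eta + (lam p q eta)^2 + p
                      \<and> c \<le> x^2 + 2 * x * lam p q eta + 3 * (lam p q eta)^2 + 2 * p"
    using bounds a2 unfolding a_def[symmetric] c_def by (smt (verit) zero_le_power2)
  then show ?thesis using bounds \<open>0 < c\<close> by blast
qed

end
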